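(* In the general setting described in the context, fix $n$ and let $\{y_k:k=1,\dots,L\}\subseteq M$ with weights $\tau_k>0$ satisfy, for some $A,B>0$, $A\|p\|_2^2\le\sum_{k=1}^L|p(y_k)|^2\tau_k\le B\|p\|_2^2$ for all $p\in\mathcal P_n$. For $f\in C(M)$ let $q=\operatorname{argmin}_{p\in\mathcal P_n}\sum_{k=1}^L|f(y_k)-p(y_k)|^2\tau_k$. Then $$\|f-q\|_2\le\big(1+(B/A)^2\big)^{1/2}\|f-P_nf\|_\infty.$$
   Context: $M$ is a compact space, $\mu$ a probability measure on $M$, $\|\cdot\|_2$ the $L^2(M,\mu)$-norm. $\{\phi_k:k\in\mathbb N\}$ is an orthonormal basis of $L^2(M,\mu)$ of continuous functions with $\phi_1\equiv1$. $(\lambda_k)$ is non-decreasing, $\lambda_k\ge0$, $\lambda_k\to\infty$. $\mathcal P_n=\operatorname{span}\{\phi_k:\lambda_k\le n\}$ and $P_n$ is the orthogonal projection of $L^2(M,\mu)$ onto $\mathcal P_n$. *)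

theory Defs
  imports "HOL-Probability.Probability"
begin

definition l2inner :: "'a measure \<Rightarrow> ('a \<Rightarrow> real) \<Rightarrow> ('a \<Rightarrow> real) \<Rightarrow> real" where
  "l2inner \<mu> f g = (\<integral>x. f x * g x \<partial>\<mu>)"

definition L2norm :: "'a measure \<Rightarrow> ('a \<Rightarrow> real) \<Rightarrow> real" where
  "L2norm \<mu> f = sqrt (\<integral>x. (f x)\<^sup>2 \<partial>\<mu>)"

definition square_integrable :: "'a measure \<Rightarrow> ('a \<Rightarrow> real) \<Rightarrow> bool" where
  "square_integrable \<mu> f \<longleftrightarrow> f \<in> borel_measurable \<mu> \<and> integrable \<mu> (\<lambda>x. (f x)\<^sup>2)"

definition orthonormal_basis_L2 :: "'a measure \<Rightarrow> (nat \<Rightarrow> 'a \<Rightarrow> real) \<Rightarrow> bool" where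
  "orthonormal_basis_L2 \<mu> \<phi> \<longleftrightarrow>
     (\<forall>k. square_integrable \<mu> (\<phi> k)) \<and>
     (\<forall>j k. l2inner \<mu> (\<phi> j) (\<phi> k) = (if j = k then 1 else 0)) \<and>
     (\<forall>f. square_integrable \<mu> f \<longrightarrow>
        (\<lambda>N. L2norm \<mu> (\<lambda>x. f x - (\<Sum>k<N. l2inner \<mu> f (\<phi> k) * \<phi> k x))) \<longlonglongrightarrow> 0)"

definition low_idx :: "(nat \<Rightarrow> real) \<Rightarrow> nat \<Rightarrow> nat set" where
  "low_idx lam n = {k. lam k \<le> real n}"

definition Pspace :: "(nat \<Rightarrow> 'a \<Rightarrow> real) \<Rightarrow> (nat \<Rightarrow> real) \<Rightarrow> nat \<Rightarrow> ('a \<Rightarrow> real) set" where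
  "Pspace \<phi> lam n = {p. \<exists>c. p = (\<lambda>x. \<Sum>k\<in>low_idx lam n. c k * \<phi> k x)}"

definition Pproj :: "'a measure \<Rightarrow> (nat \<Rightarrow> 'a \<Rightarrow> real) \<Rightarrow> (nat \<Rightarrow> real) \<Rightarrow> nat
    \<Rightarrow> ('a \<Rightarrow> real) \<Rightarrow> ('a \<Rightarrow> real)" where
  "Pproj \<mu> \<phi> lam n f = (\<lambda>x. \<Sum>k\<in>low_idx lam n. l2inner \<mu> f (\<phi> k) * \<phi> k x)"

definition supnorm :: "'a set \<Rightarrow> ('a \<Rightarrow> real) \<Rightarrow> real" where
  "supnorm M g = (SUP x\<in>M. \<bar>g x\<bar>)"

end

theory Submission
  imports Defs
begin

text \<open>Write \<open>g = f - P\<^sub>n f\<close> and \<open>r = P\<^sub>n f - q \<in> \<P>\<^sub>n\<close>, so that \<open>f - q = g + r\<close>.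
  Since \<open>g\<close> is \<open>L\<^sup>2\<close>-orthogonal to \<open>\<P>\<^sub>n\<close>, \<open>\<parallel>f - q\<parallel>\<^sub>2\<^sup>2 = \<parallel>g\<parallel>\<^sub>2\<^sup>2 + \<parallel>r\<parallel>\<^sub>2\<^sup>2\<close>, and
  \<open>\<parallel>g\<parallel>\<^sub>2 \<le> \<parallel>g\<parallel>\<^sub>\<infinity>\<close> because \<open>\<mu>\<close> is a probability measure.  Dually, the least squares
  residual \<open>f - q\<close> is orthogonal to \<open>\<P>\<^sub>n\<close> for the weighted sample inner product, so the
  sampled norm of \<open>g = (f - q) - r\<close> dominates that of \<open>r\<close>.  The sampling inequalities, applied
  to \<open>r\<close> and to the constant \<open>\<phi>\<^sub>0 = 1\<close>, give
  \<open>A \<parallel>r\<parallel>\<^sub>2\<^sup>2 \<le> \<Sum>\<^sub>k g(y\<^sub>k)\<^sup>2 \<tau>\<^sub>k \<le> \<parallel>g\<parallel>\<^sub>\<infinity>\<^sup>2 \<Sum>\<^sub>k \<tau>\<^sub>k \<le> B \<parallel>g\<parallel>\<^sub>\<infinity>\<^sup>2\<close> and \<open>A \<le> \<Sum>\<^sub>k \<tau>\<^sub>k \<le> B\<close>,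
  hence \<open>\<parallel>r\<parallel>\<^sub>2\<^sup>2 \<le> (B/A) \<parallel>g\<parallel>\<^sub>\<infinity>\<^sup>2 \<le> (B/A)\<^sup>2 \<parallel>g\<parallel>\<^sub>\<infinity>\<^sup>2\<close>.\<close>

lemma power2_L2norm: "(L2norm \<mu> u)\<^sup>2 = (\<integral>x. (u x)\<^sup>2 \<partial>\<mu>)"
  unfolding L2norm_def by (simp add: integral_nonneg_AE)

lemma abs_le_supnorm:
  fixes u :: "'a::topological_space \<Rightarrow> real"
  assumes "compact S" "continuous_on S u" "x \<in> S"
  shows "\<bar>u x\<bar> \<le> supnorm S u"
proof -
  have "bounded (u ` S)"
    using assms compact_continuous_image compact_imp_bounded by blast
  then have "bdd_above ((\<lambda>x. \<bar>u x\<bar>) ` S)"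
    by (auto simp: bounded_iff intro: bdd_aboveI2)
  then show ?thesis
    unfolding supnorm_def using assms(3) by (rule cSUP_upper2) simp
qed

lemma power2_le_supnorm:
  fixes u :: "'a::topological_space \<Rightarrow> real"
  assumes "compact S" "continuous_on S u" "x \<in> S"
  shows "(u x)\<^sup>2 \<le> (supnorm S u)\<^sup>2"
  using abs_le_supnorm[OF assms] by (metis abs_ge_zero power2_abs power_mono)

lemma supnorm_nonneg:
  fixes u :: "'a::topological_space \<Rightarrow> real"
  assumes "compact S" "continuous_on S u" "S \<noteq> {}"
  shows "0 \<le> supnorm S u"
  using abs_le_supnorm[OF assms(1,2)] assms(3) by (meson abs_ge_zero all_not_in_conv order_trans)

locale compact_borel_prob_space = prob_space M for M :: "'a::topological_space measure" +
  assumes compact_space: "compact (space M)"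
    and sets_restrict_borel: "sets M = sets (restrict_space borel (space M))"
begin

lemma borel_measurable_continuous:
  "continuous_on (space M) u \<Longrightarrow> (u :: 'a \<Rightarrow> real) \<in> borel_measurable M"
  using borel_measurable_continuous_on_restrict measurable_cong_sets[OF sets_restrict_borel refl]
  by blast

lemma integrable_continuous:
  fixes u :: "'a \<Rightarrow> real"
  assumes "continuous_on (space M) u"
  shows "integrable M u"
proof -
  have "bounded (u ` space M)"
    using assms compact_space compact_continuous_image compact_imp_bounded by blast
  then obtain C where "\<forall>x\<in>space M. \<bar>u x\<bar> \<le> C"
    by (auto simp: bounded_iff)
  then show ?thesis
    by (intro integrable_const_bound[where B = C]) (auto intro: borel_measurable_continuous assms)
qed

lemma L2norm_le_supnorm:
  assumes "continuous_on (space M) u"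
  shows "L2norm M u \<le> supnorm (space M) u"
proof -
  have "(\<integral>x. (u x)\<^sup>2 \<partial>M) \<le> (\<integral>x. (supnorm (space M) u)\<^sup>2 \<partial>M)"
  proof (rule integral_mono)
    show "integrable M (\<lambda>x. (u x)\<^sup>2)"
      by (intro integrable_continuous continuous_intros assms)
    show "(u x)\<^sup>2 \<le> (supnorm (space M) u)\<^sup>2" if "x \<in> space M" for x
      using power2_le_supnorm[OF compact_space assms that] .
  qed simp
  then have "L2norm M u \<le> sqrt ((supnorm (space M) u)\<^sup>2)"
    unfolding L2norm_def using prob_space by (intro real_sqrt_le_mono) simp
  then show ?thesis
    using supnorm_nonneg[OF compact_space assms not_empty] by simp
qed

lemma L2norm_add_orthogonal:
  assumes "continuous_on (space M) u" "continuous_on (space M) v" "l2inner M u v = 0"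
  shows "(L2norm M (\<lambda>x. u x + v x))\<^sup>2 = (L2norm M u)\<^sup>2 + (L2norm M v)\<^sup>2"
proof -
  have "(\<integral>x. (u x + v x)\<^sup>2 \<partial>M) = (\<integral>x. (u x)\<^sup>2 + 2 * (u x * v x) + (v x)\<^sup>2 \<partial>M)"
    by (rule Bochner_Integration.integral_cong) (simp_all add: power2_sum)
  also have "\<dots> = (\<integral>x. (u x)\<^sup>2 \<partial>M) + 2 * l2inner M u v + (\<integral>x. (v x)\<^sup>2 \<partial>M)"
    unfolding l2inner_def using assms(1,2)
    by (simp add: integrable_continuous continuous_intros)
  finally show ?thesis
    using assms(3) by (simp add: power2_L2norm)
qed

end

lemma finite_low_idx:
  assumes "filterlim lam at_top sequentially"
  shows "finite (low_idx lam n)"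
proof -
  obtain N where N: "\<And>k. k \<ge> N \<Longrightarrow> real n + 1 \<le> lam k"
    using assms by (auto simp: filterlim_at_top eventually_sequentially)
  have "low_idx lam n \<subseteq> {..<N}"
    using N by (force simp: low_idx_def not_less[symmetric])
  then show ?thesis
    using finite_subset by blast
qed

lemma zero_in_low_idx:
  assumes "mono lam" "low_idx lam n \<noteq> {}"
  shows "0 \<in> low_idx lam n"
  using assms by (auto simp: low_idx_def dest: monoD[of lam 0] intro: order_trans)

lemma Pspace_memI:
  "p = (\<lambda>x. \<Sum>k\<in>low_idx lam n. c k * \<phi> k x) \<Longrightarrow> p \<in> Pspace \<phi> lam n"
  unfolding Pspace_def by blast

lemma Pspace_add_scaled:
  assumes "p \<in> Pspace \<phi> lam n" "r \<in> Pspace \<phi> lam n"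
  shows "(\<lambda>x. p x + t * r x) \<in> Pspace \<phi> lam n"
proof -
  obtain c d where "p = (\<lambda>x. \<Sum>k\<in>low_idx lam n. c k * \<phi> k x)"
    and "r = (\<lambda>x. \<Sum>k\<in>low_idx lam n. d k * \<phi> k x)"
    using assms by (auto simp: Pspace_def)
  then have "(\<lambda>x. p x + t * r x) = (\<lambda>x. \<Sum>k\<in>low_idx lam n. (c k + t * d k) * \<phi> k x)"
    by (simp add: sum.distrib sum_distrib_left algebra_simps)
  then show ?thesis
    by (rule Pspace_memI)
qed

lemma Pproj_in_Pspace: "Pproj \<mu> \<phi> lam n f \<in> Pspace \<phi> lam n"
  unfolding Pproj_def by (rule Pspace_memI) (rule refl)

lemma Pproj_minus_in_Pspace:
  "q \<in> Pspace \<phi> lam n \<Longrightarrow> (\<lambda>x. Pproj \<mu> \<phi> lam n f x - q x) \<in> Pspace \<phi> lam n"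
  using Pspace_add_scaled[OF Pproj_in_Pspace, where t = "-1"] by simp

lemma basis_in_Pspace:
  assumes "finite (low_idx lam n)" "k \<in> low_idx lam n"
  shows "\<phi> k \<in> Pspace \<phi> lam n"
proof (rule Pspace_memI)
  show "\<phi> k = (\<lambda>x. \<Sum>j\<in>low_idx lam n. of_bool (j = k) * \<phi> j x)"
    using assms by simp
qed

lemma Pspace_low_idx_empty:
  assumes "low_idx lam n = {}" "p \<in> Pspace \<phi> lam n"
  shows "p = (\<lambda>x. 0)"
  using assms by (auto simp: Pspace_def)

lemma sum_weighted_square_diff:
  fixes u v w :: "'k \<Rightarrow> real"
  shows "(\<Sum>k\<in>K. (u k - t * v k)\<^sup>2 * w k) =
     (\<Sum>k\<in>K. (u k)\<^sup>2 * w k) - 2 * t * (\<Sum>k\<in>K. u k * v k * w k) + t\<^sup>2 * (\<Sum>k\<in>K. (v k)\<^sup>2 * w k)"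
  by (simp add: power2_diff sum_subtractf sum.distrib sum_distrib_left algebra_simps
      power_mult_distrib)

lemma quadratic_nonneg_imp_linear_coeff_zero:
  fixes a b :: real
  assumes "\<And>t. 0 \<le> t\<^sup>2 * a - 2 * t * b"
  shows "b = 0"
proof -
  define c where "c = \<bar>a\<bar> + 1"
  have "c > 0" "a - 2 * c < 0"
    unfolding c_def by (auto simp: abs_if)
  have "0 \<le> ((b / c)\<^sup>2 * a - 2 * (b / c) * b) * c\<^sup>2"
    using assms[of "b / c"] by simp
  also have "\<dots> = b\<^sup>2 * (a - 2 * c)"
    using \<open>c > 0\<close> by (simp add: field_simps power2_eq_square)
  finally show ?thesis
    using \<open>a - 2 * c < 0\<close> by (simp add: zero_le_mult_iff)
qed

lemma least_squares_error_dominates: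
  fixes u v w :: "'k \<Rightarrow> real"
  assumes w_nonneg: "\<And>k. k \<in> K \<Longrightarrow> w k \<ge> 0"
    and minimal: "\<And>t. (\<Sum>k\<in>K. (u k)\<^sup>2 * w k) \<le> (\<Sum>k\<in>K. (u k - t * v k)\<^sup>2 * w k)"
  shows "(\<Sum>k\<in>K. (v k)\<^sup>2 * w k) \<le> (\<Sum>k\<in>K. (u k - v k)\<^sup>2 * w k)"
proof -
  have "(\<Sum>k\<in>K. u k * v k * w k) = 0"
    using minimal by (intro quadratic_nonneg_imp_linear_coeff_zero) (simp add: sum_weighted_square_diff)
  then have "(\<Sum>k\<in>K. (u k - v k)\<^sup>2 * w k) = (\<Sum>k\<in>K. (u k)\<^sup>2 * w k) + (\<Sum>k\<in>K. (v k)\<^sup>2 * w k)"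
    using sum_weighted_square_diff[of u 1 v w K] by simp
  moreover have "(\<Sum>k\<in>K. (u k)\<^sup>2 * w k) \<ge> 0"
    using w_nonneg by (intro sum_nonneg) simp
  ultimately show ?thesis
    by linarith
qed

lemma sampled_Pproj_minus_least_squares_le:
  assumes \<tau>: "\<And>k. k \<in> K \<Longrightarrow> \<tau> k \<ge> 0"
    and q: "q \<in> Pspace \<phi> lam n"
    and q_min: "\<And>p. p \<in> Pspace \<phi> lam n \<Longrightarrow>
          (\<Sum>k\<in>K. \<bar>f (y k) - q (y k)\<bar>\<^sup>2 * \<tau> k) \<le> (\<Sum>k\<in>K. \<bar>f (y k) - p (y k)\<bar>\<^sup>2 * \<tau> k)"
  shows "(\<Sum>k\<in>K. (Pproj \<mu> \<phi> lam n f (y k) - q (y k))\<^sup>2 * \<tau> k)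
           \<le> (\<Sum>k\<in>K. (f (y k) - Pproj \<mu> \<phi> lam n f (y k))\<^sup>2 * \<tau> k)"
proof -
  define r where "r = (\<lambda>x. Pproj \<mu> \<phi> lam n f x - q x)"
  have "(\<Sum>k\<in>K. (f (y k) - q (y k))\<^sup>2 * \<tau> k) \<le>
        (\<Sum>k\<in>K. (f (y k) - q (y k) - t * r (y k))\<^sup>2 * \<tau> k)" for t
    using q_min[OF Pspace_add_scaled[OF q Pproj_minus_in_Pspace[OF q], of t]]
    by (simp add: r_def algebra_simps)
  from least_squares_error_dominates[OF \<tau> this]
  show ?thesis
    by (simp add: r_def)
qed

locale orthonormal_continuous_system = compact_borel_prob_space M for M :: "'a::topological_space measure" +
  fixes \<phi> :: "nat \<Rightarrow> 'a \<Rightarrow> real" and lam :: "nat \<Rightarrow> real"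
  assumes continuous_basis: "continuous_on (space M) (\<phi> k)"
    and orthonormal: "l2inner M (\<phi> j) (\<phi> k) = (if j = k then 1 else 0)"
    and lam_at_top: "filterlim lam at_top sequentially"
begin

lemma continuous_Pspace: "p \<in> Pspace \<phi> lam n \<Longrightarrow> continuous_on (space M) p"
  by (auto simp: Pspace_def intro!: continuous_intros continuous_basis)

lemma continuous_Pproj_residual:
  "continuous_on (space M) f \<Longrightarrow> continuous_on (space M) (\<lambda>x. f x - Pproj N \<phi> lam n f x)"
  by (intro continuous_intros continuous_Pspace[OF Pproj_in_Pspace])

lemma l2inner_Pproj_residual_basis:
  assumes f: "continuous_on (space M) f" and k: "k \<in> low_idx lam n"
  shows "l2inner M (\<lambda>x. f x - Pproj M \<phi> lam n f x) (\<phi> k) = 0"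
proof -
  define I where "I = low_idx lam n"
  have "(\<lambda>x. (f x - Pproj M \<phi> lam n f x) * \<phi> k x) =
        (\<lambda>x. f x * \<phi> k x - (\<Sum>j\<in>I. l2inner M f (\<phi> j) * (\<phi> j x * \<phi> k x)))"
    by (simp add: Pproj_def I_def left_diff_distrib sum_distrib_right mult.assoc)
  then have "l2inner M (\<lambda>x. f x - Pproj M \<phi> lam n f x) (\<phi> k) =
             l2inner M f (\<phi> k) - (\<Sum>j\<in>I. l2inner M f (\<phi> j) * l2inner M (\<phi> j) (\<phi> k))"
    unfolding l2inner_def using f
    by (simp add: integrable_continuous continuous_intros continuous_basis)
  also have "\<dots> = 0"
    using k finite_low_idx[OF lam_at_top] by (simp add: orthonormal I_def if_distrib cong: if_cong)
  finally show ?thesis .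
qed

lemma l2inner_Pproj_residual:
  assumes f: "continuous_on (space M) f" and p: "p \<in> Pspace \<phi> lam n"
  shows "l2inner M (\<lambda>x. f x - Pproj M \<phi> lam n f x) p = 0"
proof -
  define h where "h = (\<lambda>x. f x - Pproj M \<phi> lam n f x)"
  have h_cont: "continuous_on (space M) h"
    unfolding h_def using f by (rule continuous_Pproj_residual)
  obtain c where c: "p = (\<lambda>x. \<Sum>k\<in>low_idx lam n. c k * \<phi> k x)"
    using p by (auto simp: Pspace_def)
  have "l2inner M h p = (\<integral>x. (\<Sum>k\<in>low_idx lam n. c k * (h x * \<phi> k x)) \<partial>M)"
    unfolding l2inner_def c by (simp add: sum_distrib_left mult.left_commute)
  also have "\<dots> = (\<Sum>k\<in>low_idx lam n. c k * l2inner M h (\<phi> k))"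
    unfolding l2inner_def using h_cont
    by (subst Bochner_Integration.integral_sum)
      (auto intro!: integrable_continuous continuous_intros continuous_basis)
  also have "\<dots> = 0"
    unfolding h_def using l2inner_Pproj_residual_basis[OF f] by simp
  finally show ?thesis
    by (simp add: h_def)
qed

lemma sum_weights_bounds:
  assumes "mono lam" "low_idx lam n \<noteq> {}"
    and phi0: "\<And>x. x \<in> space M \<Longrightarrow> \<phi> 0 x = 1"
    and y: "\<And>k. k \<in> K \<Longrightarrow> y k \<in> space M"
    and sampling: "\<And>p. p \<in> Pspace \<phi> lam n \<Longrightarrow>
          A * (L2norm M p)\<^sup>2 \<le> (\<Sum>k\<in>K. \<bar>p (y k)\<bar>\<^sup>2 * \<tau> k) \<and>
          (\<Sum>k\<in>K. \<bar>p (y k)\<bar>\<^sup>2 * \<tau> k) \<le> B * (L2norm M p)\<^sup>2"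
  shows "A \<le> sum \<tau> K \<and> sum \<tau> K \<le> B"
proof -
  have "\<phi> 0 \<in> Pspace \<phi> lam n"
    using assms(1,2) by (intro basis_in_Pspace finite_low_idx lam_at_top zero_in_low_idx)
  moreover have "(L2norm M (\<phi> 0))\<^sup>2 = 1"
    unfolding power2_L2norm using orthonormal[of 0 0] by (simp add: l2inner_def power2_eq_square)
  moreover have "(\<Sum>k\<in>K. \<bar>\<phi> 0 (y k)\<bar>\<^sup>2 * \<tau> k) = sum \<tau> K"
    using phi0 y by simp
  ultimately show ?thesis
    using sampling[of "\<phi> 0"] by simp
qed

lemma Pproj_minus_least_squares_bound:
  assumes "mono lam"
    and phi0: "\<And>x. x \<in> space M \<Longrightarrow> \<phi> 0 x = 1"
    and y: "\<And>k. k \<in> K \<Longrightarrow> y k \<in> space M"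
    and \<tau>: "\<And>k. k \<in> K \<Longrightarrow> \<tau> k \<ge> 0"
    and "A > 0"
    and sampling: "\<And>p. p \<in> Pspace \<phi> lam n \<Longrightarrow>
          A * (L2norm M p)\<^sup>2 \<le> (\<Sum>k\<in>K. \<bar>p (y k)\<bar>\<^sup>2 * \<tau> k) \<and>
          (\<Sum>k\<in>K. \<bar>p (y k)\<bar>\<^sup>2 * \<tau> k) \<le> B * (L2norm M p)\<^sup>2"
    and f: "continuous_on (space M) f"
    and q: "q \<in> Pspace \<phi> lam n"
    and q_min: "\<And>p. p \<in> Pspace \<phi> lam n \<Longrightarrow>
          (\<Sum>k\<in>K. \<bar>f (y k) - q (y k)\<bar>\<^sup>2 * \<tau> k) \<le> (\<Sum>k\<in>K. \<bar>f (y k) - p (y k)\<bar>\<^sup>2 * \<tau> k)"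
  shows "(L2norm M (\<lambda>x. Pproj M \<phi> lam n f x - q x))\<^sup>2
           \<le> (B / A)\<^sup>2 * (supnorm (space M) (\<lambda>x. f x - Pproj M \<phi> lam n f x))\<^sup>2"
proof -
  define g where "g = (\<lambda>x. f x - Pproj M \<phi> lam n f x)"
  define r where "r = (\<lambda>x. Pproj M \<phi> lam n f x - q x)"
  define S where "S = supnorm (space M) g"
  have r_in: "r \<in> Pspace \<phi> lam n"
    unfolding r_def using q by (rule Pproj_minus_in_Pspace)
  show ?thesis
  proof (cases "low_idx lam n = {}")
    case True
    then show ?thesis
      using Pspace_low_idx_empty[OF True r_in] by (simp add: r_def L2norm_def)
  next
    case False
    then have weights: "A \<le> sum \<tau> K" "sum \<tau> K \<le> B"
      using sum_weights_bounds[OF \<open>mono lam\<close> False phi0 y sampling] by auto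
    have g_cont: "continuous_on (space M) g"
      unfolding g_def using f by (rule continuous_Pproj_residual)
    have "A * (L2norm M r)\<^sup>2 \<le> (\<Sum>k\<in>K. (r (y k))\<^sup>2 * \<tau> k)"
      using sampling[OF r_in] by simp
    also have "\<dots> \<le> (\<Sum>k\<in>K. (g (y k))\<^sup>2 * \<tau> k)"
      unfolding r_def g_def using \<tau> q q_min by (rule sampled_Pproj_minus_least_squares_le)
    also have "\<dots> \<le> (\<Sum>k\<in>K. S\<^sup>2 * \<tau> k)"
      using power2_le_supnorm[OF compact_space g_cont] y \<tau> unfolding S_def
      by (intro sum_mono mult_right_mono) auto
    also have "\<dots> \<le> S\<^sup>2 * B"
      using weights by (simp add: sum_distrib_left[symmetric] mult_left_mono)
    finally have "(L2norm M r)\<^sup>2 \<le> (B / A) * S\<^sup>2"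
      using \<open>A > 0\<close> by (simp add: field_simps)
    also have "\<dots> \<le> (B / A)\<^sup>2 * S\<^sup>2"
    proof (rule mult_right_mono)
      have "1 \<le> B / A"
        using weights \<open>A > 0\<close> by simp
      then have "B / A * 1 \<le> B / A * (B / A)"
        by (intro mult_left_mono) auto
      then show "B / A \<le> (B / A)\<^sup>2"
        by (simp only: power2_eq_square mult_1_right)
    qed simp
    finally show ?thesis
      by (simp add: S_def g_def r_def)
  qed
qed

lemma power2_L2norm_least_squares_error:
  assumes f: "continuous_on (space M) f" and q: "q \<in> Pspace \<phi> lam n"
  shows "(L2norm M (\<lambda>x. f x - q x))\<^sup>2 =
           (L2norm M (\<lambda>x. f x - Pproj M \<phi> lam n f x))\<^sup>2 + (L2norm M (\<lambda>x. Pproj M \<phi> lam n f x - q x))\<^sup>2"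
proof -
  have r: "(\<lambda>x. Pproj M \<phi> lam n f x - q x) \<in> Pspace \<phi> lam n"
    using q by (rule Pproj_minus_in_Pspace)
  from L2norm_add_orthogonal[OF continuous_Pproj_residual[OF f] continuous_Pspace[OF r]
      l2inner_Pproj_residual[OF f r]]
  show ?thesis
    by simp
qed

lemma least_squares_L2_error_bound:
  assumes "mono lam"
    and phi0: "\<And>x. x \<in> space M \<Longrightarrow> \<phi> 0 x = 1"
    and y: "\<And>k. k \<in> K \<Longrightarrow> y k \<in> space M"
    and \<tau>: "\<And>k. k \<in> K \<Longrightarrow> \<tau> k \<ge> 0"
    and "A > 0"
    and sampling: "\<And>p. p \<in> Pspace \<phi> lam n \<Longrightarrow>
          A * (L2norm M p)\<^sup>2 \<le> (\<Sum>k\<in>K. \<bar>p (y k)\<bar>\<^sup>2 * \<tau> k) \<and>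
          (\<Sum>k\<in>K. \<bar>p (y k)\<bar>\<^sup>2 * \<tau> k) \<le> B * (L2norm M p)\<^sup>2"
    and f: "continuous_on (space M) f"
    and q: "q \<in> Pspace \<phi> lam n"
    and q_min: "\<And>p. p \<in> Pspace \<phi> lam n \<Longrightarrow>
          (\<Sum>k\<in>K. \<bar>f (y k) - q (y k)\<bar>\<^sup>2 * \<tau> k) \<le> (\<Sum>k\<in>K. \<bar>f (y k) - p (y k)\<bar>\<^sup>2 * \<tau> k)"
  shows "L2norm M (\<lambda>x. f x - q x)
           \<le> sqrt (1 + (B / A)\<^sup>2) * supnorm (space M) (\<lambda>x. f x - Pproj M \<phi> lam n f x)"
proof -
  define S where "S = supnorm (space M) (\<lambda>x. f x - Pproj M \<phi> lam n f x)"
  have "S \<ge> 0"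
    unfolding S_def using f by (intro supnorm_nonneg compact_space continuous_Pproj_residual not_empty)
  have "(L2norm M (\<lambda>x. f x - Pproj M \<phi> lam n f x))\<^sup>2 \<le> S\<^sup>2"
    unfolding S_def using L2norm_le_supnorm[OF continuous_Pproj_residual[OF f]]
    by (intro power_mono) (simp_all add: L2norm_def integral_nonneg_AE)
  then have "(L2norm M (\<lambda>x. f x - q x))\<^sup>2 \<le> S\<^sup>2 + (B / A)\<^sup>2 * S\<^sup>2"
    unfolding power2_L2norm_least_squares_error[OF f q] S_def
    using Pproj_minus_least_squares_bound[OF assms] by linarith
  also have "\<dots> = (sqrt (1 + (B / A)\<^sup>2) * S)\<^sup>2"
    by (simp add: algebra_simps power_mult_distrib)
  finally show ?thesis
    using \<open>S \<ge> 0\<close> by (auto simp: S_def intro: power2_le_imp_le)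
qed

end

theorem corollary3p4:
  fixes M :: "'a::topological_space set"
    and \<mu> :: "'a measure"
    and \<phi> :: "nat \<Rightarrow> 'a \<Rightarrow> real"
    and lam :: "nat \<Rightarrow> real"
    and n L :: nat
    and y :: "nat \<Rightarrow> 'a"
    and \<tau> :: "nat \<Rightarrow> real"
    and A B :: real
    and f q :: "'a \<Rightarrow> real"
  assumes M_compact: "compact M"
    and prob: "prob_space \<mu>"
    and space_mu: "space \<mu> = M"
    and sets_mu: "sets \<mu> = sets (restrict_space borel M)"
    and onb: "orthonormal_basis_L2 \<mu> \<phi>"
    and phi_cont: "\<And>k. continuous_on M (\<phi> k)"
    and phi0: "\<And>x. x \<in> M \<Longrightarrow> \<phi> 0 x = 1"
    and lam_mono: "mono lam"
    and lam_nonneg: "\<And>k. lam k \<ge> 0"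
    and lam_inf: "filterlim lam at_top sequentially"
    and y_in: "\<And>k. k \<in> {1..L} \<Longrightarrow> y k \<in> M"
    and tau_pos: "\<And>k. k \<in> {1..L} \<Longrightarrow> \<tau> k > 0"
    and A_pos: "A > 0" and B_pos: "B > 0"
    and MZ: "\<And>p. p \<in> Pspace \<phi> lam n \<Longrightarrow>
               A * (L2norm \<mu> p)\<^sup>2 \<le> (\<Sum>k=1..L. \<bar>p (y k)\<bar>\<^sup>2 * \<tau> k) \<and>
               (\<Sum>k=1..L. \<bar>p (y k)\<bar>\<^sup>2 * \<tau> k) \<le> B * (L2norm \<mu> p)\<^sup>2"
    and f_cont: "continuous_on M f"
    and q_in: "q \<in> Pspace \<phi> lam n"
    and q_min: "\<And>p. p \<in> Pspace \<phi> lam n \<Longrightarrow>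
               (\<Sum>k=1..L. \<bar>f (y k) - q (y k)\<bar>\<^sup>2 * \<tau> k) \<le> (\<Sum>k=1..L. \<bar>f (y k) - p (y k)\<bar>\<^sup>2 * \<tau> k)"
  shows "L2norm \<mu> (\<lambda>x. f x - q x)
           \<le> sqrt (1 + (B / A)\<^sup>2) * supnorm M (\<lambda>x. f x - Pproj \<mu> \<phi> lam n f x)"
proof -
  interpret orthonormal_continuous_system \<mu> \<phi> lam
  proof (intro orthonormal_continuous_system.intro compact_borel_prob_space.intro
      compact_borel_prob_space_axioms.intro orthonormal_continuous_system_axioms.intro)
    show "l2inner \<mu> (\<phi> j) (\<phi> k) = (if j = k then 1 else 0)" for j k
      using onb by (simp add: orthonormal_basis_L2_def)
  qed (use prob M_compact space_mu sets_mu phi_cont lam_inf in simp_all)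
  show ?thesis
    using least_squares_L2_error_bound[unfolded space_mu, OF lam_mono phi0 y_in
        less_imp_le[OF tau_pos] A_pos MZ f_cont q_in q_min] .
qed

end
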